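(* If a Riordan matrix $(g,f)$ has a type-I $B$-sequence, then it belongs to $R_{0,2}$, the set of Riordan matrices whose $A$-sequence $(a_j)_{j\ge0}$ satisfies $a_0=1$ and $a_2=0$ (which is a subgroup of the Riordan group).
   Context: Let $K$ be $\mathbb{R}$ or $\mathbb{C}$. A (proper) Riordan matrix is a pair $(g,f)$ of formal power series in $K[[t]]$ with $g(0)=1$, $f(0)=0$, $f'(0)\neq 0$, identified with the infinite lower triangular matrix $(d_{n,k})_{n,k\ge0}$, $d_{n,k}=[t^n]g(t)f(t)^k$; we set $d_{n,k}=0$ if $n<0$, $k<0$ or $k>n$. The $A$-sequence $(a_j)_{j\ge0}$ is the unique sequence whose generating function $A(t)$ satisfies $f(t)=tA(f(t))$. A type-I $B$-sequence of $(g,f)$ is a sequence $(b_j)_{j\ge0}$ such that $d_{n+1,k}=d_{n,k-1}+\sum_{j\ge0}b_j d_{n-j,k+j}$ for all $n\ge0$ and $k\ge1$. *)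

theory Defs
  imports "HOL-Computational_Algebra.Formal_Power_Series" Complex_Main
begin

text \<open>The scalar field K is R or C; we use the class real_normed_field
(commutative real normed division algebras, i.e. exactly R and C up to isomorphism).\<close>

definition riordan :: "'a::real_normed_field fps \<Rightarrow> 'a fps \<Rightarrow> bool" where
  "riordan g f \<longleftrightarrow> fps_nth g 0 = 1 \<and> fps_nth f 0 = 0 \<and> fps_nth f 1 \<noteq> 0"

definition riordan_entry :: "'a::real_normed_field fps \<Rightarrow> 'a fps \<Rightarrow> int \<Rightarrow> int \<Rightarrow> 'a" where
  "riordan_entry g f n k =
     (if n < 0 \<or> k < 0 \<or> k > n then 0 else fps_nth (g * f ^ nat k) (nat n))"

definition is_A_seq :: "'a::real_normed_field fps \<Rightarrow> 'a fps \<Rightarrow> bool" where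
  "is_A_seq f A \<longleftrightarrow> f = fps_X * fps_compose A f"

definition A_seq :: "'a::real_normed_field fps \<Rightarrow> 'a fps" where
  "A_seq f = (THE A. is_A_seq f A)"

text \<open>Type-I B-sequence: d_{n+1,k} = d_{n,k-1} + sum_{j>=0} b_j d_{n-j,k+j}, n>=0, k>=1.
  Terms with j > n vanish (d_{n-j,.} = 0 for n-j<0), so the series is the finite sum over j<=n.\<close>
definition has_typeI_B_seq :: "'a::real_normed_field fps \<Rightarrow> 'a fps \<Rightarrow> bool" where
  "has_typeI_B_seq g f \<longleftrightarrow> (\<exists>b :: nat \<Rightarrow> 'a. \<forall>n::nat. \<forall>k::int. k \<ge> 1 \<longrightarrow>
      riordan_entry g f (int n + 1) k =
        riordan_entry g f (int n) (k - 1)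
        + (\<Sum>j\<le>n. b j * riordan_entry g f (int n - int j) (k + int j)))"

definition R02 :: "('a::real_normed_field fps \<times> 'a fps) set" where
  "R02 = {(g, f). riordan g f \<and> fps_nth (A_seq f) 0 = 1 \<and> fps_nth (A_seq f) 2 = 0}"

end

theory Submission
  imports Defs
begin

text \<open>Reading the type-I recurrence in column 1 for n = 0, 1, 2 (the only nonzero entries
  d_{0,0}, d_{n,0} = g_n and d_{n,1} = [t^n] g f occur) forces f_1 = 1, f_2 = b_0 and
  f_3 = b_0 f_2 = f_2^2.  On the other hand, comparing coefficients of t^1, t^2, t^3 in
  f = t A(f) gives f_1 = a_0, f_2 = a_1 f_1 and f_3 = a_1 f_2 + a_2 f_1^2.  With f_1 = 1 this
  yields a_0 = 1, a_1 = f_2 and a_2 = f_3 - f_2^2 = 0.\<close>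

unbundle fps_syntax

lemma is_A_seq_fps_inv:
  fixes f :: "'a::real_normed_field fps"
  assumes "f $ 0 = 0" "f $ 1 \<noteq> 0"
  shows "is_A_seq f (fps_shift 1 f oo fps_inv f)"
proof -
  have inv0: "fps_inv f $ 0 = 0" by (simp add: fps_inv_def)
  have "fps_shift 1 f oo fps_inv f oo f = fps_shift 1 f oo (fps_inv f oo f)"
    using fps_compose_assoc[of f "fps_inv f" "fps_shift 1 f"] assms inv0 by simp
  also have "\<dots> = fps_shift 1 f" using fps_inv[OF assms] by simp
  finally have "fps_shift 1 f oo fps_inv f oo f = fps_shift 1 f" .
  moreover have "fps_X * fps_shift 1 f = f"
    using assms by (intro fps_ext) (simp add: fps_X_mult_nth)
  ultimately show ?thesis unfolding is_A_seq_def by simp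
qed

lemma is_A_seq_unique:
  fixes f :: "'a::real_normed_field fps"
  assumes "f $ 0 = 0" "f $ 1 \<noteq> 0" "is_A_seq f A" "is_A_seq f B"
  shows "A = B"
proof -
  have "fps_X * (A oo f) = fps_X * (B oo f)" using assms(3,4) unfolding is_A_seq_def by simp
  then have AB: "A oo f = B oo f" by simp
  have inv0: "fps_inv f $ 0 = 0" by (simp add: fps_inv_def)
  have "A = (A oo f) oo fps_inv f"
    using fps_inv_right[OF assms(1,2)] fps_compose_assoc[of "fps_inv f" f A] assms(1) inv0 by simp
  also have "\<dots> = B"
    using fps_inv_right[OF assms(1,2)] fps_compose_assoc[of "fps_inv f" f B] assms(1) inv0 AB by simp
  finally show ?thesis .
qed

lemma is_A_seq_A_seq:
  fixes f :: "'a::real_normed_field fps"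
  assumes "f $ 0 = 0" "f $ 1 \<noteq> 0"
  shows "is_A_seq f (A_seq f)"
  unfolding A_seq_def
  using is_A_seq_fps_inv[OF assms] is_A_seq_unique[OF assms] by (blast intro: theI)

lemma is_A_seq_low_coeffs:
  fixes f :: "'a::real_normed_field fps"
  assumes f0: "f $ 0 = 0" and A: "is_A_seq f A"
  shows "f $ 1 = A $ 0"
    and "f $ 2 = A $ 1 * f $ 1"
    and "f $ 3 = A $ 1 * f $ 2 + A $ 2 * (f $ 1)\<^sup>2"
proof -
  have shift: "f $ Suc n = (A oo f) $ n" for n
    using A unfolding is_A_seq_def by (metis fps_X_mult_nth diff_Suc_1 nat.distinct(1))
  have sq2: "(f\<^sup>2) $ 2 = (f $ 1)\<^sup>2"
    using f0 by (simp add: power2_eq_square fps_mult_nth numeral_2_eq_2 atLeast0_atMost_Suc)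
  show "f $ 1 = A $ 0" using shift[of 0] by simp
  show "f $ 2 = A $ 1 * f $ 1" using shift[of 1] f0 by (simp add: fps_compose_nth numeral_2_eq_2)
  show "f $ 3 = A $ 1 * f $ 2 + A $ 2 * (f $ 1)\<^sup>2" using shift[of 2] f0 sq2
    by (simp add: fps_compose_nth numeral_3_eq_3 numeral_2_eq_2 atLeast0_atMost_Suc)
qed

lemma typeI_B_seq_low_coeffs:
  fixes g f :: "'a::real_normed_field fps"
  assumes "riordan g f" and "has_typeI_B_seq g f"
  shows "f $ 1 = 1" and "f $ 3 = (f $ 2)\<^sup>2"
proof -
  have g0: "g $ 0 = 1" and f0: "f $ 0 = 0" using assms(1) unfolding riordan_def by auto
  obtain b where B: "\<And>n k. k \<ge> 1 \<Longrightarrow> riordan_entry g f (int n + 1) k =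
        riordan_entry g f (int n) (k - 1)
        + (\<Sum>j\<le>n. b j * riordan_entry g f (int n - int j) (k + int j))"
    using assms(2) unfolding has_typeI_B_seq_def by blast
  let ?d = "riordan_entry g f"
  have rec0: "?d 1 1 = ?d 0 0 + b 0 * ?d 0 1" using B[of 1 0] by simp
  have rec1: "?d 2 1 = ?d 1 0 + (b 0 * ?d 1 1 + b 1 * ?d 0 2)"
    using B[of 1 1] by (simp add: atMost_Suc)
  have rec2: "?d 3 1 = ?d 2 0 + (b 0 * ?d 2 1 + b 1 * ?d 1 2 + b 2 * ?d 0 3)"
    using B[of 1 2] by (simp add: atMost_Suc numeral_2_eq_2 add.commute)
  have above_diagonal: "?d 0 1 = 0" "?d 0 2 = 0" "?d 0 3 = 0" "?d 1 2 = 0"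
    by (simp_all add: riordan_entry_def)
  have column0: "?d 0 0 = 1" "?d 1 0 = g $ 1" "?d 2 0 = g $ 2"
    using g0 by (simp_all add: riordan_entry_def)
  have column1: "?d 1 1 = f $ 1" "?d 2 1 = f $ 2 + g $ 1 * f $ 1"
    "?d 3 1 = f $ 3 + g $ 1 * f $ 2 + g $ 2 * f $ 1"
    using g0 f0 by (simp_all add: riordan_entry_def fps_mult_nth numeral_3_eq_3 numeral_2_eq_2
        atLeast0_atMost_Suc)
  show f1: "f $ 1 = 1" using rec0 above_diagonal column0 column1 by simp
  have f2: "f $ 2 = b 0" using rec1 above_diagonal column0 column1 f1 by simp
  moreover have "f $ 3 = b 0 * f $ 2" using rec2 above_diagonal column0 column1 f1 f2
    by (simp add: algebra_simps)
  ultimately show "f $ 3 = (f $ 2)\<^sup>2" by (simp add: power2_eq_square)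
qed

theorem theorem4p3:
  fixes g f :: "'a::real_normed_field fps"
  assumes "riordan g f"
    and "has_typeI_B_seq g f"
  shows "(g, f) \<in> R02"
proof -
  have f0: "f $ 0 = 0" and f1: "f $ 1 \<noteq> 0" using assms(1) unfolding riordan_def by auto
  note A_coeffs = is_A_seq_low_coeffs[OF f0 is_A_seq_A_seq[OF f0 f1]]
  note f_coeffs = typeI_B_seq_low_coeffs[OF assms]
  have "A_seq f $ 0 = 1" using A_coeffs(1) f_coeffs(1) by simp
  moreover have "A_seq f $ 2 = 0" using A_coeffs(2,3) f_coeffs by (simp add: power2_eq_square)
  ultimately show ?thesis using assms(1) unfolding R02_def by simp
qed

end
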